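(* Let $\varepsilon,\eta>0$. Then there exists $\kappa>0$ such that $\liminf_{n\to\infty}\mathbb{P}\Big(\max_{1\le k\le K}\sup_{x\in\mathbb{R}_+^2}\bar{\mathcal{Z}}^n_k(0)(C^\kappa_x)\le\varepsilon\Big)\ge1-\eta$.
   Context: Measures: $\mathbf{M}_2$ is the set of finite nonnegative Borel measures on $\mathbb{R}_+^2$ with the weak topology; $\mathbf{M}_2^K$ the product. $\langle f,\zeta\rangle=\int f\,d\zeta$ (coordinatewise for $\zeta\in\mathbf{M}_2^K$); $p_i(x)=x_i$. $C=\mathbb{R}_+\times\{0\}\cup\{0\}\times\mathbb{R}_+$, $C_x=\{y\in\mathbb{R}_+^2:y-x\in C\}$, and $C_x^\kappa=\{z\in\mathbb{R}_+^2:\inf_{y\in C_x}\|z-y\|<\kappa\}$. $\delta^+_{(x,y)}$: unit mass at $(x,y)$ if $x,y>0$, zero otherwise. Stochastic model: Fix $K$. For each class $k$: a renewal process $E_k$ of rate $\lambda_k\in(0,\infty)$ with strictly positive interarrival times; i.i.d. strictly positive service times $\{v_{k,i}\}$ with mean $1/\mu_k$; i.i.d. strictly positive deadlines $\{d_{k,i}\}$ with continuous distribution $\Gamma_k$ of finite mean; all mutually independent; $\sum_k\lambda_k/\mu_k>1$; $G_k(x)=1-\Gamma_k([0,x])$. The $n$-th system: $E^n_k(t)=E_k(nt)$, service times $v_{k,i}/n$, deadlines $d_{k,i}$; initial condition an a.s. finite integer $Z^n_+(0)\ge0$ and random $(\tilde w^n_j,\tilde p^n_j,k^n_j)\in(0,\infty)^2\times\{1,\dots,K\}$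 with $\tilde w^n_j$ nondecreasing, $\tilde w^n_1<\tilde p^n_1$, and for $2\le j\le Z^n_+(0)$, $\tilde p^n_j\le\tilde w^n_j$ iff $\tilde w^n_j=\tilde w^n_{j-1}$; $W^n(0)=\tilde w^n_{Z^n_+(0)}$ (0 if none). $Z^n_k(0)$ = number of initial jobs of class $k$, with data $(\tilde w^n_{k,j},\tilde p^n_{k,j})$, $j=1,\dots,Z^n_k(0)$, in index order. The initial fluid-scaled state is $\bar{\mathcal{Z}}^n_k(0)=\frac1n\sum_{j=1}^{Z^n_k(0)}\delta^+_{(\tilde w^n_{k,j},\tilde p^n_{k,j})}$, $\bar{\mathcal{Z}}^n(0)=(\bar{\mathcal{Z}}^n_1(0),\dots,\bar{\mathcal{Z}}^n_K(0))$. Standing assumptions: for $\vartheta\in\mathbf{M}_2^K$, $\vartheta_+=\sum_k\vartheta_k$, $w_\vartheta=\sup\{x:\vartheta_+([x,\infty)\times\mathbb{R}_+)>0\}$; $\mathbf{I}$ is the set of $\vartheta$ with $\vartheta_+(C_x)=0$ for all $x$, $w_\vartheta<\infty$, $\max_kG_k(w_\vartheta-\varepsilon)>0$ for all $\varepsilon>0$. $\mathcal{Z}^*_0$ is a random element of $\mathbf{M}_2^K$ with $\mathbb{P}(\mathcal{Z}^*_0\in\mathbf{I})=1$, $\mathbb{E}[\langle p_1+p_2,\mathcal{Z}^*_{0,+}\rangle]<\infty$, $\mathbb{E}[\mathcal{Z}^*_{0,+}(\mathbb{R}_+^2)]<\infty$; $W^*_0=w_{\mathcal{Z}^*_0}$;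 and $(\bar{\mathcal{Z}}^n(0),\langle p_1,\bar{\mathcal{Z}}^n(0)\rangle,\langle p_2,\bar{\mathcal{Z}}^n(0)\rangle,W^n(0))\Rightarrow(\mathcal{Z}^*_0,\langle p_1,\mathcal{Z}^*_0\rangle,\langle p_2,\mathcal{Z}^*_0\rangle,W^*_0)$ in distribution as $n\to\infty$. *)

theory Defs
  imports "HOL-Probability.Probability"
begin

definition Rp2 :: "(real \<times> real) set" where
  "Rp2 = {z. fst z \<ge> 0 \<and> snd z \<ge> 0}"

definition Ccone :: "(real \<times> real) set" where
  "Ccone = {(a, 0) | a. a \<ge> 0} \<union> {(0, b) | b. b \<ge> 0}"

definition Cx :: "real \<times> real \<Rightarrow> (real \<times> real) set" where
  "Cx x = {y \<in> Rp2. (fst y - fst x, snd y - snd x) \<in> Ccone}"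

definition Ckappa :: "real \<Rightarrow> real \<times> real \<Rightarrow> (real \<times> real) set" where
  "Ckappa \<kappa> x = {z \<in> Rp2. infdist z (Cx x) < \<kappa>}"

text \<open>M_2: finite nonnegative Borel measures on R_+^2, represented as finite Borel
  measures on the plane that put no mass outside R_+^2.\<close>
definition M2 :: "(real \<times> real) measure set" where
  "M2 = {\<zeta>. sets \<zeta> = sets borel \<and> emeasure \<zeta> UNIV < \<infinity> \<and> emeasure \<zeta> (UNIV - Rp2) = 0}"

definition weak_conv :: "(nat \<Rightarrow> (real \<times> real) measure) \<Rightarrow> (real \<times> real) measure \<Rightarrow> bool" where
  "weak_conv \<zeta>s \<zeta> \<longleftrightarrow>
     (\<forall>f :: real \<times> real \<Rightarrow> real. continuous_on UNIV f \<and> bounded (range f) \<longrightarrow>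
        (\<lambda>m. integral\<^sup>L (\<zeta>s m) f) \<longlonglongrightarrow> integral\<^sup>L \<zeta> f)"

definition delta_plus :: "real \<times> real \<Rightarrow> (real \<times> real) measure" where
  "delta_plus z = (if fst z > 0 \<and> snd z > 0 then return borel z else null_measure borel)"

text \<open>Fluid-scaled initial state of class k in the n-th system:
  (1/n) times the sum of delta^+ over the initial jobs of class k.\<close>
definition Zbar0 :: "nat \<Rightarrow> nat \<Rightarrow> (nat \<Rightarrow> real) \<Rightarrow> (nat \<Rightarrow> real) \<Rightarrow> (nat \<Rightarrow> 'k) \<Rightarrow> 'k
                     \<Rightarrow> (real \<times> real) measure" where
  "Zbar0 n Zp w p c k = measure_of UNIV (sets borel)
     (\<lambda>A. ennreal (1 / real n) *
          (\<Sum>j\<in>{j. 1 \<le> j \<and> j \<le> Zp \<and> c j = k}. emeasure (delta_plus (w j, p j)) A))"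

definition Winit :: "nat \<Rightarrow> (nat \<Rightarrow> real) \<Rightarrow> real" where
  "Winit Zp w = (if Zp = 0 then 0 else w Zp)"

definition valid_init :: "nat \<Rightarrow> (nat \<Rightarrow> real) \<Rightarrow> (nat \<Rightarrow> real) \<Rightarrow> bool" where
  "valid_init Zp w p \<longleftrightarrow>
     (\<forall>j. 1 \<le> j \<and> j \<le> Zp \<longrightarrow> w j > 0 \<and> p j > 0) \<and>
     (\<forall>i j. 1 \<le> i \<and> i \<le> j \<and> j \<le> Zp \<longrightarrow> w i \<le> w j) \<and>
     (1 \<le> Zp \<longrightarrow> w 1 < p 1) \<and>
     (\<forall>j. 2 \<le> j \<and> j \<le> Zp \<longrightarrow> (p j \<le> w j \<longleftrightarrow> w j = w (j - 1)))"

definition meas_plus :: "('k::finite \<Rightarrow> (real \<times> real) measure) \<Rightarrow> (real \<times> real) set \<Rightarrow> ennreal" where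
  "meas_plus th A = (\<Sum>k\<in>UNIV. emeasure (th k) A)"

definition wset :: "('k::finite \<Rightarrow> (real \<times> real) measure) \<Rightarrow> real set" where
  "wset th = {x. x \<ge> 0 \<and> meas_plus th ({x..} \<times> {0..}) > 0}"

definition wtheta :: "('k::finite \<Rightarrow> (real \<times> real) measure) \<Rightarrow> real" where
  "wtheta th = Sup ({0} \<union> wset th)"

definition Gfun :: "('k \<Rightarrow> real measure) \<Rightarrow> 'k \<Rightarrow> real \<Rightarrow> real" where
  "Gfun Gam k x = 1 - measure (Gam k) {0..x}"

definition Iset :: "('k::finite \<Rightarrow> real measure) \<Rightarrow> ('k \<Rightarrow> (real \<times> real) measure) set" where
  "Iset Gam = {th. (\<forall>x\<in>Rp2. meas_plus th (Cx x) = 0) \<and> bdd_above (wset th) \<and>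
                  (\<forall>\<epsilon>>0. (MAX k. Gfun Gam k (wtheta th - \<epsilon>)) > 0)}"

type_synonym 'k mstate = "('k \<Rightarrow> (real \<times> real) measure) \<times> ('k \<Rightarrow> real) \<times> ('k \<Rightarrow> real) \<times> real"

definition state_space :: "'k mstate set" where
  "state_space = {s. \<forall>k. fst s k \<in> M2}"

definition state_conv :: "(nat \<Rightarrow> 'k mstate) \<Rightarrow> 'k mstate \<Rightarrow> bool" where
  "state_conv ss s \<longleftrightarrow>
     (\<forall>k. weak_conv (\<lambda>m. fst (ss m) k) (fst s k)) \<and>
     (\<forall>k. (\<lambda>m. fst (snd (ss m)) k) \<longlonglongrightarrow> fst (snd s) k) \<and>
     (\<forall>k. (\<lambda>m. fst (snd (snd (ss m))) k) \<longlonglongrightarrow> fst (snd (snd s)) k) \<and>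
     (\<lambda>m. snd (snd (snd (ss m)))) \<longlonglongrightarrow> snd (snd (snd s))"

text \<open>Convergence in distribution: E[F(X_n)] -> E[F(Y)] for every bounded continuous F
  (the space is metrizable, so continuity = sequential continuity).\<close>
definition conv_in_dist :: "(nat \<Rightarrow> 'a measure) \<Rightarrow> (nat \<Rightarrow> 'a \<Rightarrow> 'k mstate) \<Rightarrow> 'b measure
                             \<Rightarrow> ('b \<Rightarrow> 'k mstate) \<Rightarrow> bool" where
  "conv_in_dist M X P Y \<longleftrightarrow>
     (\<forall>F :: 'k mstate \<Rightarrow> real.
        (\<exists>B. \<forall>s\<in>state_space. \<bar>F s\<bar> \<le> B) \<and>
        (\<forall>ss s. (\<forall>m. ss m \<in> state_space) \<and> s \<in> state_space \<and> state_conv ss s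
                 \<longrightarrow> (\<lambda>m. F (ss m)) \<longlonglongrightarrow> F s) \<and>
        (\<forall>n. (\<lambda>\<omega>. F (X n \<omega>)) \<in> borel_measurable (M n)) \<and>
        (\<lambda>\<omega>. F (Y \<omega>)) \<in> borel_measurable P
        \<longrightarrow> (\<lambda>n. \<integral>\<omega>. F (X n \<omega>) \<partial>M n) \<longlonglongrightarrow> (\<integral>\<omega>. F (Y \<omega>) \<partial>P))"

end

theory Submission
  imports Defs
begin

text \<open>
  The limit state charges no corner \<open>C\<^sub>x\<close> and is finite, so with probability close to one
  it puts little mass beyond a large square and, by continuity from above and compactness,
  little mass in thin neighbourhoods of all corners with vertex in that square. Finitely
  many continuous bumps (one per corner of a \<open>\<kappa>\<close>-grid, one for the far region) each equal 1
  on some \<open>C\<^sup>\<kappa>\<^sub>x\<close>, and their integrals against the limit are then small. Convergence in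
  distribution transfers this to the prelimit through a continuous functional of these
  integrals that is dominated by the indicator of the event in question.
\<close>

lemma nn_integral_kernel_measurable:
  fixes \<mu> :: "'b \<Rightarrow> 'c measure"
  assumes sets_\<mu>: "\<And>\<omega>. \<omega> \<in> space N \<Longrightarrow> sets (\<mu> \<omega>) = sets X"
    and emeasure_\<mu>: "\<And>A. A \<in> sets X \<Longrightarrow> (\<lambda>\<omega>. emeasure (\<mu> \<omega>) A) \<in> borel_measurable N"
    and u: "u \<in> borel_measurable X"
  shows "(\<lambda>\<omega>. \<integral>\<^sup>+z. u z \<partial>(\<mu> \<omega>)) \<in> borel_measurable N"
  using u
proof (induct rule: borel_measurable_induct)
  case (cong f g)
  have "(\<lambda>\<omega>. \<integral>\<^sup>+z. g z \<partial>(\<mu> \<omega>)) \<in> borel_measurable N" by fact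
  then show ?case
    by (rule measurable_cong[THEN iffD1, rotated])
       (intro nn_integral_cong, simp add: cong.hyps(3) sets_eq_imp_space_eq[OF sets_\<mu>])
next
  case (set A)
  have "(\<lambda>\<omega>. emeasure (\<mu> \<omega>) A) \<in> borel_measurable N" using emeasure_\<mu> set by simp
  then show ?case
    by (rule measurable_cong[THEN iffD1, rotated]) (metis nn_integral_indicator sets_\<mu> set)
next
  case (mult u c)
  have u: "\<And>\<omega>. \<omega> \<in> space N \<Longrightarrow> u \<in> borel_measurable (\<mu> \<omega>)"
    using mult(2) sets_\<mu> by (metis measurable_cong_sets)
  have "(\<lambda>\<omega>. c * \<integral>\<^sup>+z. u z \<partial>(\<mu> \<omega>)) \<in> borel_measurable N" using mult(4) by simp
  then show ?case
    by (rule measurable_cong[THEN iffD1, rotated]) (simp add: nn_integral_cmult u)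
next
  case (add u v)
  have uv: "\<And>\<omega>. \<omega> \<in> space N \<Longrightarrow> u \<in> borel_measurable (\<mu> \<omega>) \<and> v \<in> borel_measurable (\<mu> \<omega>)"
    using add(1,4) sets_\<mu> by (metis measurable_cong_sets)
  have "(\<lambda>\<omega>. (\<integral>\<^sup>+z. v z \<partial>(\<mu> \<omega>)) + (\<integral>\<^sup>+z. u z \<partial>(\<mu> \<omega>))) \<in> borel_measurable N"
    using add(3,7) by simp
  then show ?case
    by (rule measurable_cong[THEN iffD1, rotated]) (simp add: nn_integral_add uv)
next
  case (seq U)
  have U: "\<And>\<omega> i. \<omega> \<in> space N \<Longrightarrow> U i \<in> borel_measurable (\<mu> \<omega>)"
    using seq(1) sets_\<mu> by (metis measurable_cong_sets)
  have "(\<lambda>\<omega>. SUP i. \<integral>\<^sup>+z. U i z \<partial>(\<mu> \<omega>)) \<in> borel_measurable N"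
    using seq(3) by simp
  then show ?case
    by (rule measurable_cong[THEN iffD1, rotated])
       (simp add: nn_integral_monotone_convergence_SUP[symmetric] U seq(4) SUP_apply image_comp)
qed

lemma integral_kernel_measurable:
  fixes \<mu> :: "'b \<Rightarrow> 'c measure" and f :: "'c \<Rightarrow> real"
  assumes sets_\<mu>: "\<And>\<omega>. \<omega> \<in> space N \<Longrightarrow> sets (\<mu> \<omega>) = sets X"
    and emeasure_\<mu>: "\<And>A. A \<in> sets X \<Longrightarrow> (\<lambda>\<omega>. emeasure (\<mu> \<omega>) A) \<in> borel_measurable N"
    and f: "f \<in> borel_measurable X" and f_nonneg: "\<And>z. 0 \<le> f z"
  shows "(\<lambda>\<omega>. integral\<^sup>L (\<mu> \<omega>) f) \<in> borel_measurable N"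
proof -
  have "(\<lambda>\<omega>. \<integral>\<^sup>+z. ennreal (f z) \<partial>(\<mu> \<omega>)) \<in> borel_measurable N"
    using f by (intro nn_integral_kernel_measurable[OF sets_\<mu> emeasure_\<mu>]) auto
  then have "(\<lambda>\<omega>. enn2real (\<integral>\<^sup>+z. ennreal (f z) \<partial>(\<mu> \<omega>))) \<in> borel_measurable N"
    by measurable
  then show ?thesis
  proof (rule measurable_cong[THEN iffD1, rotated])
    fix \<omega> assume "\<omega> \<in> space N"
    then have "f \<in> borel_measurable (\<mu> \<omega>)" using f sets_\<mu> by (metis measurable_cong_sets)
    then show "enn2real (\<integral>\<^sup>+z. ennreal (f z) \<partial>(\<mu> \<omega>)) = integral\<^sup>L (\<mu> \<omega>) f"
      by (intro enn2real_nn_integral_eq_integral) (auto simp: f_nonneg)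
  qed
qed

lemma (in finite_measure) integral_le_measure:
  assumes A: "A \<in> sets M" and f: "f \<in> borel_measurable M"
    and f_bounds: "\<And>x. x \<in> space M \<Longrightarrow> 0 \<le> f x \<and> f x \<le> indicator A x"
  shows "integral\<^sup>L M f \<le> measure M A"
proof -
  have "integral\<^sup>L M f \<le> integral\<^sup>L M (indicator A)"
  proof (rule integral_mono)
    show "integrable M f"
      using f f_bounds by (intro integrable_const_bound[where B=1])
        (auto intro: order_trans[OF _ indicator_le_1])
    show "integrable M (indicator A :: _ \<Rightarrow> real)"
      using A by (intro integrable_const_bound[where B=1]) auto
  qed (use f_bounds in auto)
  then show ?thesis using A by simp
qed

lemma (in finite_measure) measure_le_integral:
  assumes A: "A \<in> sets M" and f: "f \<in> borel_measurable M"
    and f_bounds: "\<And>x. x \<in> space M \<Longrightarrow> indicator A x \<le> f x \<and> f x \<le> 1"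
  shows "measure M A \<le> integral\<^sup>L M f"
proof -
  have "integral\<^sup>L M (indicator A) \<le> integral\<^sup>L M f"
  proof (rule integral_mono)
    have "\<bar>f x\<bar> \<le> 1" if "x \<in> space M" for x
      using f_bounds[OF that] indicator_pos_le[of A x] by (smt (verit))
    then show "integrable M f"
      using f by (intro integrable_const_bound[where B=1]) auto
    show "integrable M (indicator A :: _ \<Rightarrow> real)"
      using A by (intro integrable_const_bound[where B=1]) auto
  qed (use f_bounds in auto)
  then show ?thesis using A by simp
qed

lemma (in prob_space) prob_incseq_gt:
  assumes A: "range A \<subseteq> events" "incseq A" and AE: "AE x in M. x \<in> (\<Union>i. A i)"
    and \<eta>: "\<eta> > 0"
  shows "\<exists>i. prob (A i) > 1 - \<eta>"
proof -
  have "prob (\<Union>i. A i) = 1"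
    using AE A(1) by (subst AE_in_set_eq_1[symmetric]) auto
  moreover have "(\<lambda>i. prob (A i)) \<longlonglongrightarrow> prob (\<Union>i. A i)"
    using A by (rule finite_Lim_measure_incseq)
  ultimately have "eventually (\<lambda>i. prob (A i) > 1 - \<eta>) sequentially"
    using \<eta> by (auto intro: order_tendstoD(1))
  then show ?thesis by (auto simp: eventually_sequentially)
qed

lemma (in prob_space) prob_Int_ge:
  assumes "A \<in> events" "B \<in> events"
  shows "prob A + prob B - 1 \<le> prob (A \<inter> B)"
proof -
  have "prob (A \<union> B) = prob A + prob B - prob (A \<inter> B)"
    using assms by (intro measure_Un3) (auto simp: fmeasurable_eq_sets)
  then show ?thesis using prob_le_1[of "A \<union> B"] by linarith
qed

lemma Liminf_measure_ge:
  fixes M :: "nat \<Rightarrow> 'a measure"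
  assumes M: "\<And>n. prob_space (M n)" and S: "\<And>n. S n \<in> sets (M n)"
    and F: "\<And>n. F n \<in> borel_measurable (M n)"
    and F_bounds: "\<And>n x. x \<in> space (M n) \<Longrightarrow> 0 \<le> F n x \<and> F n x \<le> indicator (S n) x"
    and lim: "(\<lambda>n. \<integral>x. F n x \<partial>M n) \<longlonglongrightarrow> L"
  shows "ereal L \<le> Liminf sequentially (\<lambda>n. ereal (measure (M n) (S n)))"
proof -
  have "ereal L = Liminf sequentially (\<lambda>n. ereal (\<integral>x. F n x \<partial>M n))"
    using lim by (intro lim_imp_Liminf[symmetric]) auto
  also have "\<dots> \<le> Liminf sequentially (\<lambda>n. ereal (measure (M n) (S n)))"
    using finite_measure.integral_le_measure[OF prob_space.finite_measure[OF M] S F F_bounds]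
    by (intro Liminf_mono always_eventually allI) simp
  finally show ?thesis .
qed

lemma Max_SUP_le_iff:
  fixes g :: "'k::finite \<Rightarrow> 'x \<Rightarrow> 'a::complete_linorder"
  shows "(MAX k. SUP x\<in>A. g k x) \<le> c \<longleftrightarrow> (\<forall>k. \<forall>x\<in>A. g k x \<le> c)"
  by (simp add: Max_le_iff SUP_le_iff)

lemma tendsto_Max_finite:
  fixes f :: "'i \<Rightarrow> 'a \<Rightarrow> real"
  assumes "finite I" "I \<noteq> {}" "\<And>i. i \<in> I \<Longrightarrow> (f i \<longlongrightarrow> l i) F"
  shows "((\<lambda>x. Max ((\<lambda>i. f i x) ` I)) \<longlongrightarrow> Max (l ` I)) F"
  using assms
proof (induction I rule: finite_ne_induct)
  case (insert a A)
  then have "((\<lambda>x. max (f a x) (Max ((\<lambda>i. f i x) ` A))) \<longlongrightarrow> max (l a) (Max (l ` A))) F"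
    by (intro tendsto_max) auto
  then show ?case using insert by (simp add: Max_insert)
qed simp

section \<open>The fluid-scaled initial state\<close>

lemma sets_delta_plus[simp]: "sets (delta_plus z) = sets borel"
  by (simp add: delta_plus_def)

lemma emeasure_delta_plus:
  "A \<in> sets borel \<Longrightarrow> emeasure (delta_plus z) A = (if fst z > 0 \<and> snd z > 0 \<and> z \<in> A then 1 else 0)"
  by (auto simp: delta_plus_def)

lemma sets_Zbar0[simp]: "sets (Zbar0 n Zp w p c k) = sets borel"
  unfolding Zbar0_def using sets.sigma_sets_eq[of "borel :: (real \<times> real) measure"]
  by (simp add: sets_measure_of_conv)

lemma space_Zbar0[simp]: "space (Zbar0 n Zp w p c k) = UNIV"
  by (simp add: Zbar0_def)

lemma emeasure_Zbar0_delta_plus: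
  assumes A: "A \<in> sets borel"
  shows "emeasure (Zbar0 n Zp w p c k) A = ennreal (1 / real n) *
          (\<Sum>j\<in>{j. 1 \<le> j \<and> j \<le> Zp \<and> c j = k}. emeasure (delta_plus (w j, p j)) A)"
proof -
  let ?J = "{j. 1 \<le> j \<and> j \<le> Zp \<and> c j = k}"
  have sa: "sigma_algebra UNIV (sets (borel :: (real \<times> real) measure))"
    using sets.sigma_algebra_axioms[of "borel :: (real \<times> real) measure"] by simp
  have pos: "positive (sets borel) (\<lambda>A. ennreal (1 / real n) *
          (\<Sum>j\<in>?J. emeasure (delta_plus (w j, p j)) A))"
    by (simp add: positive_def)
  have ca: "countably_additive (sets borel) (\<lambda>A. ennreal (1 / real n) *
          (\<Sum>j\<in>?J. emeasure (delta_plus (w j, p j)) A))"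
    unfolding countably_additive_def
  proof (intro allI impI)
    fix F :: "nat \<Rightarrow> (real \<times> real) set"
    assume F: "range F \<subseteq> sets borel" "disjoint_family F" "\<Union> (range F) \<in> sets borel"
    have "(\<Sum>i. (\<Sum>j\<in>?J. emeasure (delta_plus (w j, p j)) (F i)))
        = (\<Sum>j\<in>?J. \<Sum>i. emeasure (delta_plus (w j, p j)) (F i))"
      by (rule suminf_sum) simp
    also have "\<dots> = (\<Sum>j\<in>?J. emeasure (delta_plus (w j, p j)) (\<Union> (range F)))"
      by (intro sum.cong refl suminf_emeasure) (use F in auto)
    finally show "(\<Sum>i. ennreal (1 / real n) * (\<Sum>j\<in>?J. emeasure (delta_plus (w j, p j)) (F i)))
        = ennreal (1 / real n) * (\<Sum>j\<in>?J. emeasure (delta_plus (w j, p j)) (\<Union> (range F)))"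
      by simp
  qed
  show ?thesis
    unfolding Zbar0_def by (rule emeasure_measure_of_sigma[OF sa pos ca A])
qed

lemma emeasure_Zbar0:
  assumes A: "A \<in> sets borel"
  shows "emeasure (Zbar0 n Zp w p c k) A = ennreal ((1 / real n) *
          (\<Sum>j\<in>{1..Zp}. if c j = k \<and> w j > 0 \<and> p j > 0 \<and> (w j, p j) \<in> A then 1 else 0))"
proof -
  have "(\<Sum>j\<in>{j. 1 \<le> j \<and> j \<le> Zp \<and> c j = k}. emeasure (delta_plus (w j, p j)) A)
      = (\<Sum>j\<in>{1..Zp}. if c j = k then emeasure (delta_plus (w j, p j)) A else 0)"
    by (rule sum.mono_neutral_cong_left) auto
  also have "\<dots> = (\<Sum>j\<in>{1..Zp}. ennreal (if c j = k \<and> w j > 0 \<and> p j > 0 \<and> (w j, p j) \<in> A then 1 else 0))"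
    by (intro sum.cong refl) (simp add: emeasure_delta_plus A)
  also have "\<dots> = ennreal (\<Sum>j\<in>{1..Zp}. if c j = k \<and> w j > 0 \<and> p j > 0 \<and> (w j, p j) \<in> A then 1 else 0)"
    by (rule sum_ennreal) simp
  finally show ?thesis
    unfolding emeasure_Zbar0_delta_plus[OF A]
    by (simp add: ennreal_mult[symmetric] sum_nonneg)
qed

lemma finite_measure_Zbar0: "finite_measure (Zbar0 n Zp w p c k)"
  by (rule finite_measureI) (simp add: emeasure_Zbar0)

lemma emeasure_Zbar0_mono_atoms:
  assumes "A \<in> sets borel" "B \<in> sets borel"
    and "\<forall>j\<in>{1..Zp}. (w j, p j) \<in> A \<longrightarrow> (w j, p j) \<in> B"
  shows "emeasure (Zbar0 n Zp w p c k) A \<le> emeasure (Zbar0 n Zp w p c k) B"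
  unfolding emeasure_Zbar0[OF assms(1)] emeasure_Zbar0[OF assms(2)] using assms(3)
  by (intro ennreal_leI mult_left_mono sum_mono) auto

lemma sum_random_range_measurable:
  fixes h :: "nat \<Rightarrow> 'a \<Rightarrow> real"
  assumes Z: "Z \<in> measurable M (count_space UNIV)"
    and h: "\<And>j. h j \<in> borel_measurable M"
  shows "(\<lambda>\<omega>. \<Sum>j\<in>{1..Z \<omega>}. h j \<omega>) \<in> borel_measurable M"
proof -
  have "(\<lambda>\<omega>. (\<lambda>i \<omega>. \<Sum>j\<in>{1..i}. h j \<omega>) (Z \<omega>) \<omega>) \<in> borel_measurable M"
    by (rule measurable_compose_countable'[OF _ Z]) (use h in auto)
  then show ?thesis by simp
qed

lemma measurable_emeasure_Zbar0:
  fixes Zp :: "'a \<Rightarrow> nat" and wt pt :: "'a \<Rightarrow> nat \<Rightarrow> real" and cls :: "'a \<Rightarrow> nat \<Rightarrow> 'k"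
  assumes Zp: "Zp \<in> measurable M (count_space UNIV)"
    and wt: "\<And>j. (\<lambda>\<omega>. wt \<omega> j) \<in> borel_measurable M"
    and pt: "\<And>j. (\<lambda>\<omega>. pt \<omega> j) \<in> borel_measurable M"
    and cls: "\<And>j. (\<lambda>\<omega>. cls \<omega> j) \<in> measurable M (count_space UNIV)"
    and A: "A \<in> sets borel"
  shows "(\<lambda>\<omega>. emeasure (Zbar0 n (Zp \<omega>) (wt \<omega>) (pt \<omega>) (cls \<omega>) k) A) \<in> borel_measurable M"
proof -
  note [measurable] = wt pt cls A
  have "(\<lambda>\<omega>. \<Sum>j\<in>{1..Zp \<omega>}. if cls \<omega> j = k \<and> wt \<omega> j > 0 \<and> pt \<omega> j > 0 \<and> (wt \<omega> j, pt \<omega> j) \<in> A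
                            then 1 else 0 :: real) \<in> borel_measurable M"
    by (rule sum_random_range_measurable[OF Zp]) measurable
  then show ?thesis by (simp add: emeasure_Zbar0[OF A])
qed

section \<open>Corners and their neighbourhoods\<close>

definition clamp01 :: "real \<Rightarrow> real" where
  "clamp01 t = max 0 (min 1 t)"

text \<open>The sup-norm distance from \<open>z\<close> to the corner \<open>x + C\<close>, i.e. to the union of the
  rays leaving \<open>x\<close> to the right and upwards (not intersected with the quadrant).\<close>
definition corner_dist :: "real \<times> real \<Rightarrow> real \<times> real \<Rightarrow> real" where
  "corner_dist x z =
     min (max (fst x - fst z) \<bar>snd z - snd x\<bar>) (max (snd x - snd z) \<bar>fst z - fst x\<bar>)"

definition corner_band :: "real \<Rightarrow> real \<times> real \<Rightarrow> (real \<times> real) set" where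
  "corner_band d x = {z. corner_dist x z \<le> d}"

definition corner_bump :: "real \<Rightarrow> real \<times> real \<Rightarrow> real \<times> real \<Rightarrow> real" where
  "corner_bump \<kappa> g z = clamp01 ((3 * \<kappa> - corner_dist g z) / \<kappa>)"

definition tail_set :: "real \<Rightarrow> (real \<times> real) set" where
  "tail_set R = {z. R < max (fst z) (snd z)}"

definition tail_bump :: "real \<Rightarrow> real \<times> real \<Rightarrow> real" where
  "tail_bump R z = clamp01 (max (fst z) (snd z) - R)"

definition rational_points :: "(real \<times> real) set \<Rightarrow> (real \<times> real) set" where
  "rational_points A = {q \<in> A. fst q \<in> \<rat> \<and> snd q \<in> \<rat>}"

lemma clamp01_bounds: "0 \<le> clamp01 t" "clamp01 t \<le> 1"
  by (auto simp: clamp01_def)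

lemma clamp01_eq_1: "1 \<le> t \<Longrightarrow> clamp01 t = 1"
  by (auto simp: clamp01_def)

lemma pos_if_clamp01_pos: "0 < clamp01 t \<Longrightarrow> 0 < t"
  by (auto simp: clamp01_def)

lemma tendsto_clamp01: "(f \<longlongrightarrow> l) F \<Longrightarrow> ((\<lambda>x. clamp01 (f x)) \<longlongrightarrow> clamp01 l) F"
  unfolding clamp01_def by (intro tendsto_intros)

lemma borel_measurable_clamp01[measurable]: "clamp01 \<in> borel_measurable borel"
  unfolding clamp01_def by measurable

lemma continuous_on_corner_dist: "continuous_on UNIV (corner_dist x)"
  unfolding corner_dist_def by (intro continuous_intros)

lemma continuous_on_corner_bump: "\<kappa> \<noteq> 0 \<Longrightarrow> continuous_on UNIV (corner_bump \<kappa> g)"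
  unfolding corner_bump_def clamp01_def corner_dist_def by (intro continuous_intros) auto

lemma continuous_on_tail_bump: "continuous_on UNIV (tail_bump R)"
  unfolding tail_bump_def clamp01_def by (intro continuous_intros)

lemma corner_band_borel[measurable]: "corner_band d x \<in> sets borel"
  unfolding corner_band_def
  by (intro borel_closed closed_Collect_le continuous_on_corner_dist continuous_on_const)

lemma tail_set_borel[measurable]: "tail_set R \<in> sets borel"
  unfolding tail_set_def by (intro borel_open open_Collect_less continuous_intros)

lemma Ckappa_borel[measurable]: "Ckappa \<kappa> x \<in> sets borel"
proof -
  have "Ckappa \<kappa> x = Rp2 \<inter> {z. infdist z (Cx x) < \<kappa>}" by (auto simp: Ckappa_def)
  moreover have "closed Rp2"
    unfolding Rp2_def by (intro closed_Collect_conj closed_Collect_le continuous_intros)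
  moreover have "open {z. infdist z (Cx x) < \<kappa>}"
    by (intro open_Collect_less continuous_intros)
  ultimately show ?thesis by (simp add: borel_closed borel_open sets.Int)
qed

lemma countable_rational_points: "countable (rational_points A)"
  by (rule countable_subset[of _ "\<rat> \<times> \<rat>"])
     (auto simp: rational_points_def countable_rat mem_Times_iff)

lemma corner_band_mono: "d \<le> d' \<Longrightarrow> corner_band d x \<subseteq> corner_band d' x"
  by (auto simp: corner_band_def)

lemma corner_dist_shift:
  assumes "\<bar>fst x - fst g\<bar> \<le> a" "\<bar>snd x - snd g\<bar> \<le> a"
  shows "corner_dist g z \<le> corner_dist x z + a"
proof -
  have "\<bar>snd z - snd g\<bar> \<le> \<bar>snd z - snd x\<bar> + a" "\<bar>fst z - fst g\<bar> \<le> \<bar>fst z - fst x\<bar> + a"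
    using abs_triangle_ineq[of "snd z - snd x" "snd x - snd g"]
      abs_triangle_ineq[of "fst z - fst x" "fst x - fst g"] assms by simp_all
  with assms show ?thesis
    unfolding corner_dist_def by (auto simp: abs_le_iff min_def max_def)
qed

lemma corner_band_0: "x \<in> Rp2 \<Longrightarrow> corner_band 0 x = Cx x"
  unfolding corner_band_def corner_dist_def Cx_def Rp2_def Ccone_def
  by (auto simp: min_le_iff_disj)

lemma corner_dist_less_if_Ckappa:
  assumes x: "x \<in> Rp2" and z: "z \<in> Ckappa \<kappa> x"
  shows "corner_dist x z < \<kappa>"
proof -
  have xC: "x \<in> Cx x" using x by (auto simp: Cx_def Ccone_def)
  have "infdist z (Cx x) < \<kappa>" using z by (simp add: Ckappa_def)
  then have "(INF y\<in>Cx x. dist z y) < \<kappa>" using xC by (subst (asm) infdist_notempty) auto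
  then obtain y where y: "y \<in> Cx x" "dist z y < \<kappa>"
    using xC by (subst (asm) cINF_less_iff) (auto intro: bdd_belowI[of _ 0])
  have "\<bar>fst z - fst y\<bar> < \<kappa>" "\<bar>snd z - snd y\<bar> < \<kappa>"
    using dist_fst_le[of z y] dist_snd_le[of z y] y(2) by (simp_all add: dist_real_def)
  moreover have "(snd y = snd x \<and> fst y \<ge> fst x) \<or> (fst y = fst x \<and> snd y \<ge> snd x)"
    using y(1) by (auto simp: Cx_def Ccone_def)
  ultimately show ?thesis
    unfolding corner_dist_def by (auto simp: min_less_iff_disj abs_less_iff)
qed

lemma corner_bump_eq_1: "\<kappa> > 0 \<Longrightarrow> corner_dist g z \<le> 2 * \<kappa> \<Longrightarrow> corner_bump \<kappa> g z = 1"
  unfolding corner_bump_def clamp01_def by (auto simp: field_simps)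

lemma corner_bump_le_indicator:
  "\<kappa> > 0 \<Longrightarrow> corner_bump \<kappa> g z \<le> indicator (corner_band (3 * \<kappa>) g) z"
  unfolding corner_bump_def clamp01_def corner_band_def by (auto simp: field_simps indicator_def)

lemma tail_bump_le_indicator: "tail_bump R z \<le> indicator (tail_set R) z"
  unfolding tail_bump_def clamp01_def tail_set_def by (auto simp: indicator_def)

lemma tail_bump_eq_1:
  assumes "corner_dist x z < \<kappa>" "\<kappa> \<le> 1" "R + 2 < fst x \<or> R + 2 < snd x"
  shows "tail_bump R z = 1"
proof -
  have "R + 1 < fst z \<or> R + 1 < snd z"
    using assms unfolding corner_dist_def by (auto simp: min_less_iff_disj abs_less_iff)
  then show ?thesis unfolding tail_bump_def by (intro clamp01_eq_1) auto
qed

lemma infdist_Cx_shift: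
  assumes x: "x \<in> Rp2" and "fst x \<le> fst q" "snd x \<le> snd q"
  shows "infdist z (Cx q) \<le> infdist z (Cx x) + dist x q"
proof -
  have xC: "x \<in> Cx x" using x by (auto simp: Cx_def Ccone_def)
  have "infdist z (Cx q) - dist x q \<le> (INF y\<in>Cx x. dist z y)"
  proof (rule cINF_greatest)
    fix y assume y: "y \<in> Cx x"
    have "y + (q - x) \<in> Cx q"
      using y assms by (auto simp: Cx_def Rp2_def Ccone_def)
    then have "infdist z (Cx q) \<le> dist z (y + (q - x))" by (rule infdist_le)
    also have "\<dots> \<le> dist z y + dist y (y + (q - x))" by (rule dist_triangle)
    also have "dist y (y + (q - x)) = dist x q" by (simp add: dist_norm algebra_simps)
    finally show "infdist z (Cx q) - dist x q \<le> dist z y" by simp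
  qed (use xC in auto)
  then show ?thesis using xC by (subst (asm) infdist_notempty[symmetric]) auto
qed

text \<open>Moving the corner slightly up and to the right keeps finitely many points inside
  \<open>Ckappa\<close>, since each of them has some slack \<open>\<kappa> - infdist z (Cx x)\<close>.\<close>
lemma Ckappa_rational_approx:
  assumes S: "finite S" and x: "x \<in> Rp2" and \<kappa>: "\<kappa> > 0"
  shows "\<exists>q\<in>rational_points Rp2. \<forall>z\<in>S. z \<in> Ckappa \<kappa> x \<longrightarrow> z \<in> Ckappa \<kappa> q"
proof -
  define S' where "S' = {z\<in>S. z \<in> Ckappa \<kappa> x}"
  define s where "s = Min (insert \<kappa> ((\<lambda>z. \<kappa> - infdist z (Cx x)) ` S'))"
  have "finite S'" using S by (simp add: S'_def)
  then have s_pos: "s > 0" and s_le: "\<And>z. z \<in> S' \<Longrightarrow> s \<le> \<kappa> - infdist z (Cx x)"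
    using \<kappa> by (auto simp: s_def S'_def Ckappa_def)
  obtain a where a: "a \<in> \<rat>" "fst x < a" "a < fst x + s / 2"
    using Rats_dense_in_real[of "fst x" "fst x + s / 2"] s_pos by auto
  obtain b where b: "b \<in> \<rat>" "snd x < b" "b < snd x + s / 2"
    using Rats_dense_in_real[of "snd x" "snd x + s / 2"] s_pos by auto
  have "dist x (a, b) \<le> \<bar>fst x - a\<bar> + \<bar>snd x - b\<bar>"
    using sqrt_sum_squares_le_sum_abs[of "fst x - a" "snd x - b"]
    by (cases x) (simp add: dist_Pair_Pair dist_real_def)
  also have "\<dots> < s" using a b by simp
  finally have dist_q: "dist x (a, b) < s" .
  have "z \<in> Ckappa \<kappa> (a, b)" if z: "z \<in> S" "z \<in> Ckappa \<kappa> x" for z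
  proof -
    have "infdist z (Cx (a, b)) \<le> infdist z (Cx x) + dist x (a, b)"
      by (rule infdist_Cx_shift[OF x]) (use a b in auto)
    also have "\<dots> < \<kappa>" using s_le[of z] dist_q z by (simp add: S'_def)
    finally show ?thesis using z by (simp add: Ckappa_def)
  qed
  moreover have "(a, b) \<in> rational_points Rp2"
    using x a b by (auto simp: rational_points_def Rp2_def)
  ultimately show ?thesis by blast
qed

lemma measure_corner_band_tendsto_0:
  assumes "finite_measure \<mu>" "sets \<mu> = sets borel" "measure \<mu> (corner_band 0 x) = 0"
  shows "(\<lambda>j. measure \<mu> (corner_band (1 / Suc j) x)) \<longlonglongrightarrow> 0"
proof -
  interpret finite_measure \<mu> by fact
  have "(\<Inter>j. corner_band (1 / Suc j) x) = corner_band 0 x"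
  proof safe
    fix z assume "z \<in> (\<Inter>j. corner_band (1 / Suc j) x)"
    then have "\<And>j. corner_dist x z \<le> 1 / Suc j" by (auto simp: corner_band_def)
    then have "corner_dist x z \<le> 0"
      by (metis nat_approx_posE not_less order_le_less_trans)
    then show "z \<in> corner_band 0 x" by (simp add: corner_band_def)
  qed (auto simp: corner_band_def order_trans)
  moreover have "(\<lambda>j. measure \<mu> (corner_band (1 / Suc j) x))
      \<longlonglongrightarrow> measure \<mu> (\<Inter>j. corner_band (1 / Suc j) x)"
  proof (rule finite_Lim_measure_decseq)
    have "1 / real (Suc n) \<le> 1 / real (Suc m)" if "m \<le> n" for m n :: nat
      using that by (intro divide_left_mono) auto
    then show "decseq (\<lambda>j. corner_band (1 / real (Suc j)) x)"
      unfolding decseq_def corner_band_def by (auto intro: order_trans)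
  qed (auto simp: assms(2))
  ultimately show ?thesis using assms(3) by simp
qed

lemma measure_tail_set_tendsto_0:
  assumes "finite_measure \<mu>" "sets \<mu> = sets borel"
  shows "(\<lambda>j. measure \<mu> (tail_set (real j))) \<longlonglongrightarrow> 0"
proof -
  interpret finite_measure \<mu> by fact
  have "(\<Inter>j. tail_set (real j)) = {}"
  proof safe
    fix z assume z: "z \<in> (\<Inter>j. tail_set (real j))"
    obtain j :: nat where "max (fst z) (snd z) < real j" using reals_Archimedean2 by blast
    moreover have "z \<in> tail_set (real j)" using z by blast
    ultimately show "z \<in> {}" by (auto simp: tail_set_def less_max_iff_disj)
  qed
  moreover have "(\<lambda>j. measure \<mu> (tail_set (real j))) \<longlonglongrightarrow> measure \<mu> (\<Inter>j. tail_set (real j))"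
  proof (rule finite_Lim_measure_decseq)
    show "decseq (\<lambda>j. tail_set (real j))"
      unfolding decseq_def tail_set_def by auto
  qed (auto simp: assms(2))
  ultimately show ?thesis by simp
qed

lemma corner_band_uniform:
  fixes \<mu> :: "(real \<times> real) measure"
  assumes \<mu>: "finite_measure \<mu>" "sets \<mu> = sets borel" and K: "compact K"
    and null: "\<And>x. x \<in> K \<Longrightarrow> measure \<mu> (corner_band 0 x) = 0" and e: "e > 0"
  shows "\<exists>\<delta>>0. \<forall>x\<in>K. measure \<mu> (corner_band \<delta> x) < e"
proof -
  interpret finite_measure \<mu> by fact
  have "\<exists>d>0. measure \<mu> (corner_band (2 * d) x) < e" if x: "x \<in> K" for x
  proof -
    obtain j where j: "measure \<mu> (corner_band (1 / Suc j) x) < e"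
      using order_tendstoD(2)[OF measure_corner_band_tendsto_0[OF \<mu> null[OF x]] e]
      by (auto simp: eventually_sequentially)
    have "2 * (1 / (2 * real (Suc j))) = 1 / real (Suc j)" by (simp add: field_simps)
    then show ?thesis
      using j by (intro exI[of _ "1 / (2 * real (Suc j))"]) auto
  qed
  then obtain d where d: "\<And>x. x \<in> K \<Longrightarrow> d x > 0 \<and> measure \<mu> (corner_band (2 * d x) x) < e"
    by metis
  have "K \<subseteq> (\<Union>x\<in>K. ball x (d x))" using d by force
  then obtain C where C: "C \<subseteq> K" "finite C" "K \<subseteq> (\<Union>x\<in>C. ball x (d x))"
    using compactE_image[OF K, of K "\<lambda>x. ball x (d x)"] by auto
  show ?thesis
  proof (cases "C = {}")
    case True
    then show ?thesis using C by (intro exI[of _ 1]) auto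
  next
    case False
    define \<delta> where "\<delta> = Min (d ` C)"
    have "\<delta> > 0" unfolding \<delta>_def using C d False by (auto simp: Min_gr_iff)
    moreover have "measure \<mu> (corner_band \<delta> y) < e" if "y \<in> K" for y
    proof -
      obtain x where x: "x \<in> C" "dist x y < d x" using C \<open>y \<in> K\<close> by auto
      have \<delta>_le: "\<delta> \<le> d x" unfolding \<delta>_def using x C by (intro Min_le) auto
      have "\<bar>fst y - fst x\<bar> \<le> d x" "\<bar>snd y - snd x\<bar> \<le> d x"
        using dist_fst_le[of x y] dist_snd_le[of x y] x by (simp_all add: dist_real_def)
      then have "corner_dist x z \<le> corner_dist y z + d x" for z
        by (rule corner_dist_shift)
      with \<delta>_le have "corner_band \<delta> y \<subseteq> corner_band (2 * d x) x"
        unfolding corner_band_def by (smt (verit) mem_Collect_eq subsetI)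
      then have "measure \<mu> (corner_band \<delta> y) \<le> measure \<mu> (corner_band (2 * d x) x)"
        by (rule finite_measure_mono) (simp add: \<mu>(2))
      also have "\<dots> < e" using d x C by blast
      finally show ?thesis .
    qed
    ultimately show ?thesis by blast
  qed
qed

section \<open>Test functions\<close>

definition corner_grid :: "real \<Rightarrow> nat \<Rightarrow> (real \<times> real) set" where
  "corner_grid \<kappa> N = (\<lambda>(i, j). (\<kappa> * real i, \<kappa> * real j)) ` ({..N} \<times> {..N})"

definition test_functions :: "real \<Rightarrow> real \<Rightarrow> (real \<times> real \<Rightarrow> real) set" where
  "test_functions \<kappa> R =
     insert (tail_bump R) (corner_bump \<kappa> ` corner_grid \<kappa> (nat \<lceil>(R + 2) / \<kappa>\<rceil>))"

definition test_family :: "(real \<times> real \<Rightarrow> real) set \<Rightarrow> bool" where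
  "test_family FS \<longleftrightarrow> finite FS \<and> FS \<noteq> {} \<and>
     (\<forall>f\<in>FS. continuous_on UNIV f \<and> (\<forall>z. 0 \<le> f z \<and> f z \<le> 1))"

definition covers_Ckappa :: "real \<Rightarrow> (real \<times> real \<Rightarrow> real) set \<Rightarrow> bool" where
  "covers_Ckappa \<kappa> FS \<longleftrightarrow> (\<forall>x\<in>Rp2. \<exists>f\<in>FS. \<forall>z\<in>Ckappa \<kappa> x. f z = 1)"

lemma test_family_borel: "test_family FS \<Longrightarrow> f \<in> FS \<Longrightarrow> f \<in> borel_measurable borel"
  by (auto simp: test_family_def intro: borel_measurable_continuous_onI)

lemma test_family_bounds: "test_family FS \<Longrightarrow> f \<in> FS \<Longrightarrow> 0 \<le> f z \<and> f z \<le> 1"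
  unfolding test_family_def by blast

lemma test_family_test_functions:
  assumes "\<kappa> > 0"
  shows "test_family (test_functions \<kappa> R)"
proof -
  have "continuous_on UNIV f" if "f \<in> test_functions \<kappa> R" for f
    using that assms by (auto simp: test_functions_def
        intro: continuous_on_tail_bump continuous_on_corner_bump)
  moreover have "0 \<le> f z \<and> f z \<le> 1" if "f \<in> test_functions \<kappa> R" for f z
    using that by (auto simp: test_functions_def tail_bump_def corner_bump_def clamp01_bounds)
  ultimately show ?thesis
    by (auto simp: test_family_def test_functions_def corner_grid_def)
qed

lemma floor_grid_bounds:
  fixes t \<kappa> B :: real
  assumes \<kappa>: "\<kappa> > 0" and t: "0 \<le> t" "t \<le> B"
  shows "\<kappa> * real (nat \<lfloor>t / \<kappa>\<rfloor>) \<le> t" "t < \<kappa> * real (nat \<lfloor>t / \<kappa>\<rfloor>) + \<kappa>"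
    "nat \<lfloor>t / \<kappa>\<rfloor> \<le> nat \<lceil>B / \<kappa>\<rceil>"
proof -
  have fl: "real (nat \<lfloor>t / \<kappa>\<rfloor>) = of_int \<lfloor>t / \<kappa>\<rfloor>" using t \<kappa> by simp
  have "of_int \<lfloor>t / \<kappa>\<rfloor> * \<kappa> \<le> t"
    using \<kappa> pos_le_divide_eq[of \<kappa> "of_int \<lfloor>t / \<kappa>\<rfloor>" t] by simp
  then show "\<kappa> * real (nat \<lfloor>t / \<kappa>\<rfloor>) \<le> t" by (simp add: fl mult.commute)
  have "t < (of_int \<lfloor>t / \<kappa>\<rfloor> + 1) * \<kappa>"
    using \<kappa> pos_divide_less_eq[of \<kappa> t "of_int \<lfloor>t / \<kappa>\<rfloor> + 1"] by simp
  then show "t < \<kappa> * real (nat \<lfloor>t / \<kappa>\<rfloor>) + \<kappa>" by (simp add: fl algebra_simps)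
  have "t / \<kappa> \<le> B / \<kappa>" using t \<kappa> by (simp add: divide_right_mono)
  then have "\<lfloor>t / \<kappa>\<rfloor> \<le> \<lceil>B / \<kappa>\<rceil>" by linarith
  then show "nat \<lfloor>t / \<kappa>\<rfloor> \<le> nat \<lceil>B / \<kappa>\<rceil>" by (rule nat_mono)
qed

lemma covers_Ckappa_test_functions:
  assumes \<kappa>: "0 < \<kappa>" "\<kappa> \<le> 1"
  shows "covers_Ckappa \<kappa> (test_functions \<kappa> R)"
  unfolding covers_Ckappa_def
proof
  fix x assume x: "x \<in> Rp2"
  show "\<exists>f\<in>test_functions \<kappa> R. \<forall>z\<in>Ckappa \<kappa> x. f z = 1"
  proof (cases "R + 2 < fst x \<or> R + 2 < snd x")
    case True
    then have "\<forall>z\<in>Ckappa \<kappa> x. tail_bump R z = 1"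
      using corner_dist_less_if_Ckappa[OF x] tail_bump_eq_1[OF _ \<kappa>(2)] by blast
    then show ?thesis by (intro bexI[of _ "tail_bump R"]) (auto simp: test_functions_def)
  next
    case False
    then have x_box: "0 \<le> fst x" "fst x \<le> R + 2" "0 \<le> snd x" "snd x \<le> R + 2"
      using x by (auto simp: Rp2_def)
    note g1 = floor_grid_bounds[OF \<kappa>(1) x_box(1,2)]
    note g2 = floor_grid_bounds[OF \<kappa>(1) x_box(3,4)]
    define g where "g = (\<kappa> * real (nat \<lfloor>fst x / \<kappa>\<rfloor>), \<kappa> * real (nat \<lfloor>snd x / \<kappa>\<rfloor>))"
    have "g \<in> corner_grid \<kappa> (nat \<lceil>(R + 2) / \<kappa>\<rceil>)"
      using g1(3) g2(3) by (auto simp: g_def corner_grid_def)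
    moreover have "\<bar>fst x - fst g\<bar> \<le> \<kappa>" "\<bar>snd x - snd g\<bar> \<le> \<kappa>"
      using g1 g2 by (simp_all add: g_def)
    then have "corner_bump \<kappa> g z = 1" if "z \<in> Ckappa \<kappa> x" for z
      using corner_dist_less_if_Ckappa[OF x that] corner_dist_shift[of x g \<kappa> z]
      by (intro corner_bump_eq_1 \<kappa>) auto
    ultimately show ?thesis
      by (intro bexI[of _ "corner_bump \<kappa> g"]) (auto simp: test_functions_def)
  qed
qed

lemma corner_grid_rational_points:
  assumes \<kappa>: "0 < \<kappa>" "\<kappa> \<le> 1" "\<kappa> \<in> \<rat>" and R: "0 \<le> R"
  shows "corner_grid \<kappa> (nat \<lceil>(R + 2) / \<kappa>\<rceil>) \<subseteq> rational_points (cbox (0, 0) (R + 3, R + 3))"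
proof -
  define N where "N = nat \<lceil>(R + 2) / \<kappa>\<rceil>"
  have "real N \<le> (R + 2) / \<kappa> + 1" using R \<kappa> by (simp add: N_def)
  then have "\<kappa> * real N \<le> R + 2 + \<kappa>" using \<kappa> by (simp add: field_simps)
  moreover have "\<kappa> * real i \<le> \<kappa> * real N" if "i \<le> N" for i
    using that \<kappa> by (intro mult_left_mono) auto
  ultimately have "\<kappa> * real i \<le> R + 3" if "i \<le> N" for i
    using that \<kappa>(2) by (smt (verit))
  then show ?thesis
    using \<kappa> by (auto simp: corner_grid_def rational_points_def cbox_Pair_eq N_def)
qed

lemma integral_test_functions_le:
  assumes \<mu>: "finite_measure \<mu>" "sets \<mu> = sets borel" and \<kappa>: "\<kappa> > 0"
    and tail: "measure \<mu> (tail_set R) \<le> c"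
    and bands: "\<forall>g\<in>corner_grid \<kappa> (nat \<lceil>(R + 2) / \<kappa>\<rceil>). measure \<mu> (corner_band (3 * \<kappa>) g) \<le> c"
    and f: "f \<in> test_functions \<kappa> R"
  shows "integral\<^sup>L \<mu> f \<le> c"
proof -
  interpret finite_measure \<mu> by fact
  have f_meas: "f \<in> borel_measurable \<mu>"
    using test_family_borel[OF test_family_test_functions[OF \<kappa>] f] \<mu>(2)
    by (simp cong: measurable_cong_sets)
  have f_bounds: "0 \<le> f z" for z
    using test_family_bounds[OF test_family_test_functions[OF \<kappa>] f] by blast
  from f consider "f = tail_bump R"
    | g where "g \<in> corner_grid \<kappa> (nat \<lceil>(R + 2) / \<kappa>\<rceil>)" "f = corner_bump \<kappa> g"
    by (auto simp: test_functions_def)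
  then show ?thesis
  proof cases
    case 1
    have "integral\<^sup>L \<mu> f \<le> measure \<mu> (tail_set R)"
      using f_meas f_bounds tail_bump_le_indicator 1 \<mu>(2)
      by (intro integral_le_measure) auto
    then show ?thesis using tail by linarith
  next
    case (2 g)
    have "integral\<^sup>L \<mu> f \<le> measure \<mu> (corner_band (3 * \<kappa>) g)"
      using f_meas f_bounds corner_bump_le_indicator[OF \<kappa>] 2 \<mu>(2)
      by (intro integral_le_measure) auto
    then show ?thesis using bands 2 by fastforce
  qed
qed

definition max_test_integral ::
  "(real \<times> real \<Rightarrow> real) set \<Rightarrow> ('k::finite \<Rightarrow> (real \<times> real) measure) \<Rightarrow> real" where
  "max_test_integral FS \<zeta> = Max ((\<lambda>(k, f). integral\<^sup>L (\<zeta> k) f) ` (UNIV \<times> FS))"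

text \<open>A continuous surrogate for the indicator of \<open>max_test_integral FS \<zeta> \<le> \<epsilon>\<close>.\<close>
definition test_level ::
  "real \<Rightarrow> (real \<times> real \<Rightarrow> real) set \<Rightarrow> ('k::finite \<Rightarrow> (real \<times> real) measure) \<Rightarrow> real" where
  "test_level \<epsilon> FS \<zeta> = clamp01 ((\<epsilon> - max_test_integral FS \<zeta>) / (\<epsilon> / 2))"

lemma test_level_bounds: "0 \<le> test_level \<epsilon> FS \<zeta>" "test_level \<epsilon> FS \<zeta> \<le> 1"
  by (simp_all add: test_level_def clamp01_bounds)

lemma finite_test_index:
  assumes "test_family FS"
  shows "finite ((UNIV :: 'k::finite set) \<times> FS)" "(UNIV :: 'k set) \<times> FS \<noteq> {}"
  using assms by (simp_all add: test_family_def)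

lemma test_level_eq_1:
  assumes FS: "test_family FS" and \<epsilon>: "\<epsilon> > 0"
    and small: "\<And>k f. f \<in> FS \<Longrightarrow> integral\<^sup>L (\<zeta> k) f \<le> \<epsilon> / 2"
  shows "test_level \<epsilon> FS \<zeta> = 1"
proof -
  have "max_test_integral FS \<zeta> \<le> \<epsilon> / 2"
    unfolding max_test_integral_def using finite_test_index[OF FS] small
    by (intro Max.boundedI) auto
  then show ?thesis
    using \<epsilon> unfolding test_level_def by (intro clamp01_eq_1) (simp add: le_divide_eq)
qed

lemma integral_less_if_test_level_pos:
  assumes FS: "test_family FS" and \<epsilon>: "\<epsilon> > 0" and pos: "0 < test_level \<epsilon> FS \<zeta>"
    and f: "f \<in> FS"
  shows "integral\<^sup>L (\<zeta> k) f < \<epsilon>"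
proof -
  have "integral\<^sup>L (\<zeta> k) f \<le> max_test_integral FS \<zeta>"
    using finite_test_index[OF FS] f unfolding max_test_integral_def by (intro Max_ge) force+
  moreover have "max_test_integral FS \<zeta> < \<epsilon>"
    using pos_if_clamp01_pos[OF pos[unfolded test_level_def]] \<epsilon>
    by (simp add: zero_less_divide_iff)
  ultimately show ?thesis by linarith
qed

lemma emeasure_Ckappa_le_if_test_level_pos:
  assumes \<zeta>: "\<And>k. finite_measure (\<zeta> k)" "\<And>k. sets (\<zeta> k) = sets borel"
    and FS: "test_family FS" "covers_Ckappa \<kappa> FS" and \<epsilon>: "\<epsilon> > 0"
    and pos: "0 < test_level \<epsilon> FS \<zeta>" and x: "x \<in> Rp2"
  shows "emeasure (\<zeta> k) (Ckappa \<kappa> x) \<le> ennreal \<epsilon>"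
proof -
  interpret finite_measure "\<zeta> k" by (rule \<zeta>(1))
  obtain f where f: "f \<in> FS" "\<And>z. z \<in> Ckappa \<kappa> x \<Longrightarrow> f z = 1"
    using FS(2) x by (auto simp: covers_Ckappa_def)
  have "measure (\<zeta> k) (Ckappa \<kappa> x) \<le> integral\<^sup>L (\<zeta> k) f"
  proof (rule measure_le_integral)
    show "f \<in> borel_measurable (\<zeta> k)"
      using test_family_borel[OF FS(1) f(1)] \<zeta>(2) by (simp cong: measurable_cong_sets)
    show "indicator (Ckappa \<kappa> x) z \<le> f z \<and> f z \<le> 1" for z
      using test_family_bounds[OF FS(1) f(1)] f(2) by (auto simp: indicator_def)
  qed (simp add: \<zeta>(2))
  also have "\<dots> < \<epsilon>" by (rule integral_less_if_test_level_pos[OF FS(1) \<epsilon> pos f(1)])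
  finally show ?thesis by (simp add: emeasure_eq_measure ennreal_leI)
qed

lemma tendsto_test_level:
  assumes FS: "test_family FS" and \<epsilon>: "\<epsilon> > 0"
    and conv: "\<And>k. weak_conv (\<lambda>m. \<zeta>s m k) (\<zeta> k)"
  shows "(\<lambda>m. test_level \<epsilon> FS (\<zeta>s m)) \<longlonglongrightarrow> test_level \<epsilon> FS \<zeta>"
proof -
  have "(\<lambda>m. integral\<^sup>L (\<zeta>s m k) f) \<longlonglongrightarrow> integral\<^sup>L (\<zeta> k) f" if "f \<in> FS" for k f
  proof -
    have "continuous_on UNIV f" using FS that by (simp add: test_family_def)
    moreover have "bounded (range f)"
      using test_family_bounds[OF FS that]
      by (intro bounded_subset[OF bounded_closed_interval[of 0 1]]) auto
    ultimately show ?thesis using conv[of k, unfolded weak_conv_def] by simp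
  qed
  then have "(\<lambda>m. max_test_integral FS (\<zeta>s m)) \<longlonglongrightarrow> max_test_integral FS \<zeta>"
    unfolding max_test_integral_def using finite_test_index[OF FS]
    by (intro tendsto_Max_finite) auto
  then show ?thesis
    unfolding test_level_def using \<epsilon> by (intro tendsto_clamp01 tendsto_intros) auto
qed

lemma measurable_test_level:
  fixes \<mu> :: "'b \<Rightarrow> 'k::finite \<Rightarrow> (real \<times> real) measure"
  assumes sets_\<mu>: "\<And>\<omega> k. \<omega> \<in> space N \<Longrightarrow> sets (\<mu> \<omega> k) = sets borel"
    and emeasure_\<mu>: "\<And>k A. A \<in> sets borel \<Longrightarrow> (\<lambda>\<omega>. emeasure (\<mu> \<omega> k) A) \<in> borel_measurable N"
    and FS: "test_family FS"
  shows "(\<lambda>\<omega>. test_level \<epsilon> FS (\<mu> \<omega>)) \<in> borel_measurable N"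
proof -
  have "(\<lambda>\<omega>. integral\<^sup>L (\<mu> \<omega> k) f) \<in> borel_measurable N" if "f \<in> FS" for k f
    using FS that sets_\<mu> emeasure_\<mu> test_family_borel[OF FS that]
    by (intro integral_kernel_measurable[where X=borel]) (auto simp: test_family_def)
  then have "(\<lambda>\<omega>. max_test_integral FS (\<mu> \<omega>)) \<in> borel_measurable N"
    unfolding max_test_integral_def using finite_test_index[OF FS]
    by (intro borel_measurable_Max) auto
  then show ?thesis unfolding test_level_def by measurable
qed

lemma conv_in_dist_test_level:
  assumes conv: "conv_in_dist M X P Y" and FS: "test_family FS" and \<epsilon>: "\<epsilon> > 0"
    and meas_X: "\<And>n. (\<lambda>\<omega>. test_level \<epsilon> FS (fst (X n \<omega>))) \<in> borel_measurable (M n)"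
    and meas_Y: "(\<lambda>\<omega>. test_level \<epsilon> FS (fst (Y \<omega>))) \<in> borel_measurable P"
  shows "(\<lambda>n. \<integral>\<omega>. test_level \<epsilon> FS (fst (X n \<omega>)) \<partial>M n)
           \<longlonglongrightarrow> (\<integral>\<omega>. test_level \<epsilon> FS (fst (Y \<omega>)) \<partial>P)"
proof (rule conv[unfolded conv_in_dist_def, rule_format], intro conjI allI impI)
  show "\<exists>B. \<forall>s\<in>state_space. \<bar>test_level \<epsilon> FS (fst s)\<bar> \<le> B"
    by (intro exI[of _ 1]) (simp add: abs_of_nonneg test_level_bounds)
  show "(\<lambda>m. test_level \<epsilon> FS (fst (ss m))) \<longlonglongrightarrow> test_level \<epsilon> FS (fst s)"
    if "(\<forall>m. ss m \<in> state_space) \<and> s \<in> state_space \<and> state_conv ss s" for ss s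
    using that by (intro tendsto_test_level[OF FS \<epsilon>]) (simp add: state_conv_def)
qed (use meas_X meas_Y in auto)

section \<open>The prelimit event\<close>

lemma Zbar0_Ckappa_le_iff_rational:
  assumes \<kappa>: "\<kappa> > 0"
  shows "(\<forall>x\<in>Rp2. emeasure (Zbar0 n Zp w p c k) (Ckappa \<kappa> x) \<le> a) \<longleftrightarrow>
         (\<forall>q\<in>rational_points Rp2. emeasure (Zbar0 n Zp w p c k) (Ckappa \<kappa> q) \<le> a)"
proof
  assume le: "\<forall>q\<in>rational_points Rp2. emeasure (Zbar0 n Zp w p c k) (Ckappa \<kappa> q) \<le> a"
  show "\<forall>x\<in>Rp2. emeasure (Zbar0 n Zp w p c k) (Ckappa \<kappa> x) \<le> a"
  proof
    fix x assume x: "x \<in> Rp2"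
    obtain q where q: "q \<in> rational_points Rp2"
      "\<forall>z\<in>(\<lambda>j. (w j, p j)) ` {1..Zp}. z \<in> Ckappa \<kappa> x \<longrightarrow> z \<in> Ckappa \<kappa> q"
      using Ckappa_rational_approx[OF _ x \<kappa>] by blast
    then have "emeasure (Zbar0 n Zp w p c k) (Ckappa \<kappa> x) \<le> emeasure (Zbar0 n Zp w p c k) (Ckappa \<kappa> q)"
      by (intro emeasure_Zbar0_mono_atoms) auto
    also have "\<dots> \<le> a" using le q(1) by blast
    finally show "emeasure (Zbar0 n Zp w p c k) (Ckappa \<kappa> x) \<le> a" .
  qed
qed (auto simp: rational_points_def)

lemma sets_Zbar0_Ckappa_event:
  fixes Zp :: "'a \<Rightarrow> nat" and wt pt :: "'a \<Rightarrow> nat \<Rightarrow> real" and cls :: "'a \<Rightarrow> nat \<Rightarrow> 'k::finite"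
  assumes Zp: "Zp \<in> measurable M (count_space UNIV)"
    and wt: "\<And>j. (\<lambda>\<omega>. wt \<omega> j) \<in> borel_measurable M"
    and pt: "\<And>j. (\<lambda>\<omega>. pt \<omega> j) \<in> borel_measurable M"
    and cls: "\<And>j. (\<lambda>\<omega>. cls \<omega> j) \<in> measurable M (count_space UNIV)"
    and \<kappa>: "\<kappa> > 0"
  shows "{\<omega> \<in> space M. \<forall>k. \<forall>x\<in>Rp2.
           emeasure (Zbar0 n (Zp \<omega>) (wt \<omega>) (pt \<omega>) (cls \<omega>) k) (Ckappa \<kappa> x) \<le> a} \<in> sets M"
proof -
  note [measurable] = measurable_emeasure_Zbar0[OF Zp wt pt cls Ckappa_borel]
  have "{\<omega> \<in> space M. \<forall>k. \<forall>q\<in>rational_points Rp2.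
           emeasure (Zbar0 n (Zp \<omega>) (wt \<omega>) (pt \<omega>) (cls \<omega>) k) (Ckappa \<kappa> q) \<le> a} \<in> sets M"
    by (intro sets.sets_Collect_countable_All
        sets.sets_Collect_countable_All'[OF _ countable_rational_points]) measurable
  then show ?thesis by (simp add: Zbar0_Ckappa_le_iff_rational[OF \<kappa>])
qed

lemma measurable_test_level_Zbar0:
  fixes Zp :: "'a \<Rightarrow> nat" and wt pt :: "'a \<Rightarrow> nat \<Rightarrow> real" and cls :: "'a \<Rightarrow> nat \<Rightarrow> 'k::finite"
  assumes "Zp \<in> measurable M (count_space UNIV)"
    and "\<And>j. (\<lambda>\<omega>. wt \<omega> j) \<in> borel_measurable M"
    and "\<And>j. (\<lambda>\<omega>. pt \<omega> j) \<in> borel_measurable M"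
    and "\<And>j. (\<lambda>\<omega>. cls \<omega> j) \<in> measurable M (count_space UNIV)"
    and "test_family FS"
  shows "(\<lambda>\<omega>. test_level \<epsilon> FS (Zbar0 n (Zp \<omega>) (wt \<omega>) (pt \<omega>) (cls \<omega>))) \<in> borel_measurable M"
  by (rule measurable_test_level[OF _ measurable_emeasure_Zbar0[OF assms(1-4)] assms(5)]) simp

lemma Liminf_prob_Zbar0_Ckappa_ge:
  fixes Zp :: "nat \<Rightarrow> 'a \<Rightarrow> nat" and wt pt :: "nat \<Rightarrow> 'a \<Rightarrow> nat \<Rightarrow> real"
    and cls :: "nat \<Rightarrow> 'a \<Rightarrow> nat \<Rightarrow> 'k::finite"
  assumes M_prob: "\<And>n. prob_space (M n)"
    and Zp: "\<And>n. Zp n \<in> measurable (M n) (count_space UNIV)"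
    and wt: "\<And>n j. (\<lambda>\<omega>. wt n \<omega> j) \<in> borel_measurable (M n)"
    and pt: "\<And>n j. (\<lambda>\<omega>. pt n \<omega> j) \<in> borel_measurable (M n)"
    and cls: "\<And>n j. (\<lambda>\<omega>. cls n \<omega> j) \<in> measurable (M n) (count_space UNIV)"
    and FS: "test_family FS" "covers_Ckappa \<kappa> FS" and \<kappa>: "\<kappa> > 0" and \<epsilon>: "\<epsilon> > 0"
    and lim: "(\<lambda>n. \<integral>\<omega>. test_level \<epsilon> FS (Zbar0 n (Zp n \<omega>) (wt n \<omega>) (pt n \<omega>) (cls n \<omega>)) \<partial>M n)
      \<longlonglongrightarrow> L"
  shows "ereal L \<le> Liminf sequentially (\<lambda>n. ereal (measure (M n) {\<omega> \<in> space (M n). \<forall>k. \<forall>x\<in>Rp2.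
           emeasure (Zbar0 n (Zp n \<omega>) (wt n \<omega>) (pt n \<omega>) (cls n \<omega>) k) (Ckappa \<kappa> x) \<le> ennreal \<epsilon>}))"
proof (rule Liminf_measure_ge[OF M_prob sets_Zbar0_Ckappa_event[OF Zp wt pt cls \<kappa>]
      measurable_test_level_Zbar0[OF Zp wt pt cls FS(1)] _ lim])
  fix n \<omega>
  let ?Z = "Zbar0 n (Zp n \<omega>) (wt n \<omega>) (pt n \<omega>) (cls n \<omega>)"
  assume "\<omega> \<in> space (M n)"
  then have "\<omega> \<in> {\<omega> \<in> space (M n). \<forall>k. \<forall>x\<in>Rp2.
      emeasure (Zbar0 n (Zp n \<omega>) (wt n \<omega>) (pt n \<omega>) (cls n \<omega>) k) (Ckappa \<kappa> x) \<le> ennreal \<epsilon>}"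
    if "0 < test_level \<epsilon> FS ?Z"
    using emeasure_Ckappa_le_if_test_level_pos[OF finite_measure_Zbar0 sets_Zbar0 FS \<epsilon> that] by blast
  then show "0 \<le> test_level \<epsilon> FS ?Z \<and> test_level \<epsilon> FS ?Z \<le> indicator {\<omega> \<in> space (M n). \<forall>k. \<forall>x\<in>Rp2.
      emeasure (Zbar0 n (Zp n \<omega>) (wt n \<omega>) (pt n \<omega>) (cls n \<omega>) k) (Ckappa \<kappa> x) \<le> ennreal \<epsilon>} \<omega>"
    using test_level_bounds[of \<epsilon> FS ?Z] by (cases "0 < test_level \<epsilon> FS ?Z") auto
qed

section \<open>The limit state\<close>

locale random_finite_measures = prob_space P
  for P :: "'b measure" and Zs :: "'b \<Rightarrow> 'k::finite \<Rightarrow> (real \<times> real) measure" +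
  assumes sets_Zs: "\<And>\<omega> k. \<omega> \<in> space P \<Longrightarrow> sets (Zs \<omega> k) = sets borel"
    and finite_measure_Zs: "\<And>\<omega> k. \<omega> \<in> space P \<Longrightarrow> finite_measure (Zs \<omega> k)"
    and measure_Zs_measurable:
      "\<And>k A. A \<in> sets borel \<Longrightarrow> (\<lambda>\<omega>. measure (Zs \<omega> k) A) \<in> borel_measurable P"
begin

lemma emeasure_Zs_measurable:
  assumes "A \<in> sets borel"
  shows "(\<lambda>\<omega>. emeasure (Zs \<omega> k) A) \<in> borel_measurable P"
proof -
  have "(\<lambda>\<omega>. ennreal (measure (Zs \<omega> k) A)) \<in> borel_measurable P"
    using measure_Zs_measurable[OF assms] by measurable
  then show ?thesis
    by (rule measurable_cong[THEN iffD1, rotated])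
       (simp add: finite_measure.emeasure_eq_measure[OF finite_measure_Zs])
qed

lemma measure_Zs_mono:
  "\<omega> \<in> space P \<Longrightarrow> A \<subseteq> B \<Longrightarrow> B \<in> sets borel \<Longrightarrow> measure (Zs \<omega> k) A \<le> measure (Zs \<omega> k) B"
  using finite_measure.finite_measure_mono[OF finite_measure_Zs] sets_Zs by metis

lemma measurable_test_level_Zs:
  "test_family FS \<Longrightarrow> (\<lambda>\<omega>. test_level \<epsilon> FS (Zs \<omega>)) \<in> borel_measurable P"
  by (rule measurable_test_level[OF sets_Zs emeasure_Zs_measurable])

lemma sets_uniformly_small:
  assumes "countable Q" "\<And>q. S q \<in> sets borel"
  shows "{\<omega> \<in> space P. \<forall>k. \<forall>q\<in>Q. measure (Zs \<omega> k) (S q) \<le> c} \<in> events"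
proof -
  note [measurable] = measure_Zs_measurable[OF assms(2)]
  show ?thesis
    by (intro sets.sets_Collect_countable_All sets.sets_Collect_countable_All'[OF _ assms(1)])
       measurable
qed

lemma prob_uniformly_small:
  fixes S :: "nat \<Rightarrow> 'q \<Rightarrow> (real \<times> real) set"
  assumes Q: "countable Q" and S: "\<And>j q. S j q \<in> sets borel"
    and S_decseq: "\<And>j q. S (Suc j) q \<subseteq> S j q"
    and small: "AE \<omega> in P. \<forall>k. eventually (\<lambda>j. \<forall>q\<in>Q. measure (Zs \<omega> k) (S j q) \<le> c) sequentially"
    and \<eta>: "\<eta> > 0"
  shows "\<exists>j. prob {\<omega> \<in> space P. \<forall>k. \<forall>q\<in>Q. measure (Zs \<omega> k) (S j q) \<le> c} > 1 - \<eta>"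
proof -
  define E where "E j = {\<omega> \<in> space P. \<forall>k. \<forall>q\<in>Q. measure (Zs \<omega> k) (S j q) \<le> c}" for j
  have "E j \<in> events" for j
    unfolding E_def by (rule sets_uniformly_small[OF Q S])
  then have "range E \<subseteq> events" by blast
  moreover have "E j \<subseteq> E (Suc j)" for j
  proof
    fix \<omega> assume \<omega>: "\<omega> \<in> E j"
    then have "measure (Zs \<omega> k) (S (Suc j) q) \<le> measure (Zs \<omega> k) (S j q)" for k q
      by (intro measure_Zs_mono[OF _ S_decseq S]) (simp add: E_def)
    with \<omega> show "\<omega> \<in> E (Suc j)"
      unfolding E_def by (blast intro: order_trans)
  qed
  then have "incseq E" by (rule incseq_SucI)
  moreover have "AE \<omega> in P. \<omega> \<in> (\<Union>j. E j)"
    using small AE_space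
  proof eventually_elim
    case (elim \<omega>)
    then have "eventually (\<lambda>j. \<forall>k. \<forall>q\<in>Q. measure (Zs \<omega> k) (S j q) \<le> c) sequentially"
      by (intro eventually_all_finite) auto
    then obtain j where "\<forall>k. \<forall>q\<in>Q. measure (Zs \<omega> k) (S j q) \<le> c"
      by (auto simp: eventually_sequentially)
    then show ?case using elim by (auto simp: E_def)
  qed
  ultimately show ?thesis unfolding E_def by (rule prob_incseq_gt[OF _ _ _ \<eta>])
qed

lemma prob_tail_small:
  assumes c: "c > 0" and \<eta>: "\<eta> > 0"
  shows "\<exists>R::nat. prob {\<omega> \<in> space P. \<forall>k. measure (Zs \<omega> k) (tail_set (real R)) \<le> c} > 1 - \<eta>"
proof -
  \<comment> \<open>The tail set does not depend on a corner, so a one-point index set suffices.\<close>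
  have "\<exists>j. prob {\<omega> \<in> space P. \<forall>k. \<forall>q\<in>UNIV :: unit set. measure (Zs \<omega> k) (tail_set (real j)) \<le> c}
      > 1 - \<eta>"
  proof (rule prob_uniformly_small[where S="\<lambda>j _. tail_set (real j)", OF _ _ _ _ \<eta>])
    show "tail_set (real (Suc j)) \<subseteq> tail_set (real j)" for j
      by (auto simp: tail_set_def)
    have "eventually (\<lambda>j. \<forall>q\<in>UNIV :: unit set. measure (Zs \<omega> k) (tail_set (real j)) \<le> c) sequentially"
      if "\<omega> \<in> space P" for \<omega> k
      using order_tendstoD(2)[OF measure_tail_set_tendsto_0[OF finite_measure_Zs[OF that, of k]
            sets_Zs[OF that, of k]] c]
      by eventually_elim simp
    then show "AE \<omega> in P. \<forall>k. eventually (\<lambda>j. \<forall>q\<in>UNIV :: unit set.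
        measure (Zs \<omega> k) (tail_set (real j)) \<le> c) sequentially"
      by (intro AE_I2) blast
  qed simp_all
  then show ?thesis by simp
qed

lemma prob_corner_bands_small:
  assumes K: "compact K" and Q: "countable Q" "Q \<subseteq> K"
    and null: "AE \<omega> in P. \<forall>k. \<forall>x\<in>K. measure (Zs \<omega> k) (corner_band 0 x) = 0"
    and c: "c > 0" and \<eta>: "\<eta> > 0"
  shows "\<exists>m. prob {\<omega> \<in> space P. \<forall>k. \<forall>q\<in>Q. measure (Zs \<omega> k) (corner_band (1 / Suc m) q) \<le> c}
           > 1 - \<eta>"
proof (rule prob_uniformly_small[OF Q(1) _ _ _ \<eta>])
  have "1 / real (Suc j') \<le> 1 / real (Suc j)" if "j \<le> j'" for j j'
    using that by (intro divide_left_mono) auto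
  note inverse_Suc_mono = this
  show "corner_band (1 / real (Suc (Suc j))) q \<subseteq> corner_band (1 / real (Suc j)) q" for j q
    by (rule corner_band_mono[OF inverse_Suc_mono]) simp
  show "AE \<omega> in P. \<forall>k. eventually (\<lambda>j. \<forall>q\<in>Q. measure (Zs \<omega> k) (corner_band (1 / Suc j) q) \<le> c)
          sequentially"
    using null AE_space
  proof eventually_elim
    case (elim \<omega>)
    show ?case
    proof
      fix k
      obtain \<delta> where \<delta>: "\<delta> > 0" "\<forall>x\<in>K. measure (Zs \<omega> k) (corner_band \<delta> x) < c"
        using corner_band_uniform[OF finite_measure_Zs sets_Zs K _ c] elim by blast
      obtain j0 where j0: "1 / real (Suc j0) < \<delta>" using \<delta>(1) by (rule nat_approx_posE)
      have "measure (Zs \<omega> k) (corner_band (1 / Suc j) q) \<le> c" if "j0 \<le> j" "q \<in> Q" for j q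
      proof -
        have "corner_band (1 / Suc j) q \<subseteq> corner_band \<delta> q"
          using inverse_Suc_mono[OF that(1)] j0 by (intro corner_band_mono) linarith
        then have "measure (Zs \<omega> k) (corner_band (1 / Suc j) q) \<le> measure (Zs \<omega> k) (corner_band \<delta> q)"
          using elim by (intro measure_Zs_mono) auto
        also have "\<dots> < c" using \<delta>(2) Q(2) that(2) by blast
        finally show ?thesis by simp
      qed
      then show "eventually (\<lambda>j. \<forall>q\<in>Q. measure (Zs \<omega> k) (corner_band (1 / Suc j) q) \<le> c) sequentially"
        unfolding eventually_sequentially by blast
    qed
  qed
qed simp

text \<open>Only rational corners are constrained, which keeps the event measurable.\<close>
definition regular_event :: "nat \<Rightarrow> nat \<Rightarrow> real \<Rightarrow> 'b set" where
  "regular_event R m c = {\<omega> \<in> space P. \<forall>k. measure (Zs \<omega> k) (tail_set (real R)) \<le> c \<and>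
     (\<forall>q\<in>rational_points (cbox (0, 0) (real R + 3, real R + 3)).
        measure (Zs \<omega> k) (corner_band (1 / Suc m) q) \<le> c)}"

lemma regular_event_Int:
  "regular_event R m c = {\<omega> \<in> space P. \<forall>k. measure (Zs \<omega> k) (tail_set (real R)) \<le> c} \<inter>
     {\<omega> \<in> space P. \<forall>k. \<forall>q\<in>rational_points (cbox (0, 0) (real R + 3, real R + 3)).
        measure (Zs \<omega> k) (corner_band (1 / Suc m) q) \<le> c}"
  by (auto simp: regular_event_def)

lemma sets_tail_event: "{\<omega> \<in> space P. \<forall>k. measure (Zs \<omega> k) (tail_set R) \<le> c} \<in> events"
proof -
  note [measurable] = measure_Zs_measurable[OF tail_set_borel]
  show ?thesis by measurable
qed

lemma sets_regular_event: "regular_event R m c \<in> events"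
  unfolding regular_event_Int
  by (rule sets.Int[OF sets_tail_event sets_uniformly_small[OF countable_rational_points]]) simp

lemma prob_regular_event:
  assumes null: "AE \<omega> in P. \<forall>k. \<forall>x\<in>Rp2. emeasure (Zs \<omega> k) (Cx x) = 0"
    and c: "c > 0" and \<eta>: "\<eta> > 0"
  shows "\<exists>R m. 1 - \<eta> \<le> prob (regular_event R m c)"
proof -
  obtain R :: nat
    where R: "prob {\<omega> \<in> space P. \<forall>k. measure (Zs \<omega> k) (tail_set (real R)) \<le> c} > 1 - \<eta> / 2"
    using prob_tail_small[OF c, of "\<eta> / 2"] \<eta> by auto
  define box where "box = cbox (0, 0) (real R + 3, real R + 3)"
  have box_Rp2: "box \<subseteq> Rp2" by (auto simp: box_def cbox_Pair_eq Rp2_def mem_Times_iff)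
  have null_box: "AE \<omega> in P. \<forall>k. \<forall>x\<in>box. measure (Zs \<omega> k) (corner_band 0 x) = 0"
    using null by eventually_elim (use box_Rp2 in \<open>auto simp: corner_band_0 measure_def subset_iff\<close>)
  have "compact box" "rational_points box \<subseteq> box"
    by (auto simp: box_def rational_points_def compact_cbox)
  then obtain m where m: "prob {\<omega> \<in> space P. \<forall>k. \<forall>q\<in>rational_points box.
      measure (Zs \<omega> k) (corner_band (1 / Suc m) q) \<le> c} > 1 - \<eta> / 2"
    using prob_corner_bands_small[OF _ countable_rational_points _ null_box c, where \<eta>="\<eta> / 2"] \<eta>
    by auto
  have "{\<omega> \<in> space P. \<forall>k. \<forall>q\<in>rational_points box.
      measure (Zs \<omega> k) (corner_band (1 / Suc m) q) \<le> c} \<in> events"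
    by (rule sets_uniformly_small[OF countable_rational_points]) simp
  from prob_Int_ge[OF sets_tail_event[where R="real R" and c=c] this] R m
  have "1 - \<eta> \<le> prob (regular_event R m c)"
    unfolding regular_event_Int box_def by linarith
  then show ?thesis by blast
qed

lemma exists_test_functions:
  assumes null: "AE \<omega> in P. \<forall>k. \<forall>x\<in>Rp2. emeasure (Zs \<omega> k) (Cx x) = 0"
    and \<epsilon>: "\<epsilon> > 0" and \<eta>: "\<eta> > 0"
  shows "\<exists>\<kappa>>0. \<exists>FS. test_family FS \<and> covers_Ckappa \<kappa> FS \<and>
           1 - \<eta> \<le> (\<integral>\<omega>. test_level \<epsilon> FS (Zs \<omega>) \<partial>P)"
proof -
  obtain R m where prob_regular: "1 - \<eta> \<le> prob (regular_event R m (\<epsilon> / 2))"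
    using prob_regular_event[OF null _ \<eta>, of "\<epsilon> / 2"] \<epsilon> by auto
  define \<kappa> where "\<kappa> = 1 / (3 * real (Suc m))"
  have \<kappa>: "0 < \<kappa>" "\<kappa> \<le> 1" "\<kappa> \<in> \<rat>" and width: "3 * \<kappa> = 1 / Suc m"
    unfolding \<kappa>_def by (auto simp: field_simps intro!: Rats_divide Rats_mult)
  define FS where "FS = test_functions \<kappa> (real R)"
  have FS: "test_family FS" "covers_Ckappa \<kappa> FS"
    unfolding FS_def using \<kappa> by (auto intro: test_family_test_functions covers_Ckappa_test_functions)
  have "test_level \<epsilon> FS (Zs \<omega>) = 1" if \<omega>: "\<omega> \<in> regular_event R m (\<epsilon> / 2)" for \<omega>
  proof (rule test_level_eq_1[OF FS(1) \<epsilon>])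
    fix k f assume f: "f \<in> FS"
    have sp: "\<omega> \<in> space P" using \<omega> by (simp add: regular_event_def)
    show "integral\<^sup>L (Zs \<omega> k) f \<le> \<epsilon> / 2"
    proof (rule integral_test_functions_le[OF finite_measure_Zs[OF sp] sets_Zs[OF sp] \<kappa>(1)])
      show "measure (Zs \<omega> k) (tail_set (real R)) \<le> \<epsilon> / 2" using \<omega> by (simp add: regular_event_def)
      show "\<forall>g\<in>corner_grid \<kappa> (nat \<lceil>(real R + 2) / \<kappa>\<rceil>).
          measure (Zs \<omega> k) (corner_band (3 * \<kappa>) g) \<le> \<epsilon> / 2"
        using \<omega> corner_grid_rational_points[OF \<kappa>, of "real R"] by (auto simp: regular_event_def width)
      show "f \<in> test_functions \<kappa> (real R)" using f by (simp add: FS_def)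
    qed
  qed
  then have "prob (regular_event R m (\<epsilon> / 2)) \<le> (\<integral>\<omega>. test_level \<epsilon> FS (Zs \<omega>) \<partial>P)"
    using sets_regular_event measurable_test_level_Zs[OF FS(1)] test_level_bounds
    by (intro measure_le_integral) (auto simp: indicator_def)
  then show ?thesis using \<kappa>(1) FS prob_regular by fastforce
qed

end

lemma finite_measure_M2: "\<zeta> \<in> M2 \<Longrightarrow> finite_measure \<zeta>"
  unfolding M2_def by (intro finite_measureI) (auto simp: sets_eq_imp_space_eq[of \<zeta> borel])

lemma random_finite_measures_M2:
  assumes "prob_space P" "\<And>\<omega> k. \<omega> \<in> space P \<Longrightarrow> Zs \<omega> k \<in> M2"
    and "\<And>k A. A \<in> sets borel \<Longrightarrow> (\<lambda>\<omega>. measure (Zs \<omega> k) A) \<in> borel_measurable P"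
  shows "random_finite_measures P Zs"
proof (intro random_finite_measures.intro random_finite_measures_axioms.intro assms(1))
  show "sets (Zs \<omega> k) = sets borel" if "\<omega> \<in> space P" for \<omega> k
    using assms(2)[OF that] by (simp add: M2_def)
  show "finite_measure (Zs \<omega> k)" if "\<omega> \<in> space P" for \<omega> k
    using assms(2)[OF that] by (rule finite_measure_M2)
qed (rule assms(3))

lemma emeasure_Cx_Iset: "th \<in> Iset Gam \<Longrightarrow> x \<in> Rp2 \<Longrightarrow> emeasure (th k) (Cx x) = 0"
  by (simp add: Iset_def meas_plus_def)

theorem lemma5p7:
  fixes Gam :: "'k::finite \<Rightarrow> real measure"
    and M :: "nat \<Rightarrow> 'a measure"
    and Zp :: "nat \<Rightarrow> 'a \<Rightarrow> nat"
    and wt pt :: "nat \<Rightarrow> 'a \<Rightarrow> nat \<Rightarrow> real"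
    and cls :: "nat \<Rightarrow> 'a \<Rightarrow> nat \<Rightarrow> 'k"
    and P :: "'b measure"
    and Zs :: "'b \<Rightarrow> 'k \<Rightarrow> (real \<times> real) measure"
    and \<epsilon> \<eta> :: real
  assumes Gam_prob: "\<And>k. prob_space (Gam k)"
    and Gam_sets: "\<And>k. sets (Gam k) = sets borel"
    and Gam_cont: "\<And>k x. emeasure (Gam k) {x} = 0"
    and Gam_pos: "\<And>k. emeasure (Gam k) {..0} = 0"
    and Gam_mean: "\<And>k. integrable (Gam k) (\<lambda>x. x)"
    and M_prob: "\<And>n. prob_space (M n)"
    and Zp_meas: "\<And>n. Zp n \<in> measurable (M n) (count_space UNIV)"
    and wt_meas: "\<And>n j. (\<lambda>\<omega>. wt n \<omega> j) \<in> borel_measurable (M n)"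
    and pt_meas: "\<And>n j. (\<lambda>\<omega>. pt n \<omega> j) \<in> borel_measurable (M n)"
    and cls_meas: "\<And>n j. (\<lambda>\<omega>. cls n \<omega> j) \<in> measurable (M n) (count_space UNIV)"
    and init_valid: "\<And>n \<omega>. \<omega> \<in> space (M n) \<Longrightarrow> valid_init (Zp n \<omega>) (wt n \<omega>) (pt n \<omega>)"
    and P_prob: "prob_space P"
    and Zs_M2: "\<And>\<omega> k. \<omega> \<in> space P \<Longrightarrow> Zs \<omega> k \<in> M2"
    and Zs_meas: "\<And>k A. A \<in> sets borel \<Longrightarrow> (\<lambda>\<omega>. measure (Zs \<omega> k) A) \<in> borel_measurable P"
    and Zs_I: "AE \<omega> in P. Zs \<omega> \<in> Iset Gam"
    and Zs_first_moment:
      "(\<integral>\<^sup>+\<omega>. (\<Sum>k\<in>UNIV. \<integral>\<^sup>+z. ennreal (fst z + snd z) \<partial>(Zs \<omega> k)) \<partial>P) < \<infinity>"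
    and Zs_mass: "(\<integral>\<^sup>+\<omega>. (\<Sum>k\<in>UNIV. emeasure (Zs \<omega> k) UNIV) \<partial>P) < \<infinity>"
    and conv: "conv_in_dist M
        (\<lambda>n \<omega>. (\<lambda>k. Zbar0 n (Zp n \<omega>) (wt n \<omega>) (pt n \<omega>) (cls n \<omega>) k,
                 \<lambda>k. integral\<^sup>L (Zbar0 n (Zp n \<omega>) (wt n \<omega>) (pt n \<omega>) (cls n \<omega>) k) fst,
                 \<lambda>k. integral\<^sup>L (Zbar0 n (Zp n \<omega>) (wt n \<omega>) (pt n \<omega>) (cls n \<omega>) k) snd,
                 Winit (Zp n \<omega>) (wt n \<omega>)))
        P
        (\<lambda>\<omega>. (Zs \<omega>, \<lambda>k. integral\<^sup>L (Zs \<omega> k) fst, \<lambda>k. integral\<^sup>L (Zs \<omega> k) snd, wtheta (Zs \<omega>)))"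
    and eps_pos: "\<epsilon> > 0"
    and eta_pos: "\<eta> > 0"
  shows "\<exists>\<kappa>>0. Liminf sequentially
           (\<lambda>n. ereal (measure (M n)
              {\<omega> \<in> space (M n).
                 (MAX k. SUP x\<in>Rp2. emeasure (Zbar0 n (Zp n \<omega>) (wt n \<omega>) (pt n \<omega>) (cls n \<omega>) k)
                                       (Ckappa \<kappa> x)) \<le> ennreal \<epsilon>}))
         \<ge> ereal (1 - \<eta>)"
proof -
  interpret random_finite_measures P Zs
    by (rule random_finite_measures_M2[OF P_prob Zs_M2 Zs_meas])
  have "AE \<omega> in P. \<forall>k. \<forall>x\<in>Rp2. emeasure (Zs \<omega> k) (Cx x) = 0"
    using Zs_I by eventually_elim (simp add: emeasure_Cx_Iset)
  then obtain \<kappa> FS where \<kappa>: "\<kappa> > 0" and FS: "test_family FS" "covers_Ckappa \<kappa> FS"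
    and limit: "1 - \<eta> \<le> (\<integral>\<omega>. test_level \<epsilon> FS (Zs \<omega>) \<partial>P)"
    using exists_test_functions[OF _ eps_pos eta_pos] by blast
  have "(\<lambda>n. \<integral>\<omega>. test_level \<epsilon> FS (Zbar0 n (Zp n \<omega>) (wt n \<omega>) (pt n \<omega>) (cls n \<omega>)) \<partial>M n)
      \<longlonglongrightarrow> (\<integral>\<omega>. test_level \<epsilon> FS (Zs \<omega>) \<partial>P)"
    using conv_in_dist_test_level[OF conv FS(1) eps_pos]
      measurable_test_level_Zbar0[OF Zp_meas wt_meas pt_meas cls_meas FS(1)]
      measurable_test_level_Zs[OF FS(1)]
    by simp
  from Liminf_prob_Zbar0_Ckappa_ge[OF M_prob Zp_meas wt_meas pt_meas cls_meas FS \<kappa> eps_pos this]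
  have "ereal (1 - \<eta>) \<le> Liminf sequentially (\<lambda>n. ereal (measure (M n) {\<omega> \<in> space (M n).
      \<forall>k. \<forall>x\<in>Rp2. emeasure (Zbar0 n (Zp n \<omega>) (wt n \<omega>) (pt n \<omega>) (cls n \<omega>) k) (Ckappa \<kappa> x)
        \<le> ennreal \<epsilon>}))"
    using limit by (meson ereal_less_eq(3) order_trans)
  then show ?thesis
    using \<kappa> unfolding Max_SUP_le_iff by blast
qed

end
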